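(* Let $\rho\in(0,1)$ and let $f:\mathbb{R}^n\to B^k$ be optimally stable with parameter $\rho$. Then there exists $\lambda\in\mathbb{R}^k$ such that \[\big\|U_\rho f(x)-\lambda/2\big\|\,f(x)=U_\rho f(x)-\lambda/2\quad\text{for almost every }x\in\mathbb{R}^n.\]
   Context: $\gamma$ is the standard Gaussian measure on $\mathbb{R}^n$, $U_\rho f(x)=\mathbb{E}[f(\rho x+\sqrt{1-\rho^2}\mathbf{z})]$ with $\mathbf{z}\sim\gamma$. A measurable $f:\mathbb{R}^n\to B^k$ is optimally stable with parameter $\rho$ if $\mathbb{E}_\gamma f=0$ and $\mathbb{E}_{\mathbf{x}\sim_\rho\mathbf{y}}\langle f(\mathbf{x}),f(\mathbf{y})\rangle$ is maximal among all measurable $g:\mathbb{R}^n\to B^k$ with $\mathbb{E}_\gamma g=0$, where $\mathbf{x}\sim_\rho\mathbf{y}$ are $\rho$-correlated standard Gaussian vectors. *)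

theory Defs
  imports "HOL-Probability.Probability"
begin

definition gauss_density :: "real^'n \<Rightarrow> real" where
  "gauss_density x = (2 * pi) powr (- real CARD('n) / 2) * exp (- (norm x)\<^sup>2 / 2)"

definition std_gaussian :: "(real^'n) measure" where
  "std_gaussian = density lborel (\<lambda>x. ennreal (gauss_density x))"

definition OU :: "real \<Rightarrow> (real^'n \<Rightarrow> real^'k) \<Rightarrow> real^'n \<Rightarrow> real^'k" where
  "OU \<rho> f x = (\<integral>z. f (\<rho> *\<^sub>R x + sqrt (1 - \<rho>\<^sup>2) *\<^sub>R z) \<partial>std_gaussian)"

text \<open>Noise stability E_{x ~rho y} <f(x), f(y)>, where (x,y) are rho-correlated standard
  Gaussians realised as y = rho x + sqrt(1-rho^2) z with x, z independent standard Gaussians.\<close>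
definition noise_stab :: "real \<Rightarrow> (real^'n \<Rightarrow> real^'k) \<Rightarrow> real" where
  "noise_stab \<rho> f = (\<integral>p. inner (f (fst p)) (f (\<rho> *\<^sub>R fst p + sqrt (1 - \<rho>\<^sup>2) *\<^sub>R snd p))
      \<partial>(std_gaussian \<Otimes>\<^sub>M std_gaussian))"

definition admissible :: "(real^'n \<Rightarrow> real^'k) \<Rightarrow> bool" where
  "admissible g \<longleftrightarrow> g \<in> borel_measurable borel \<and> (\<forall>x. g x \<in> cball 0 1)
      \<and> (\<integral>x. g x \<partial>std_gaussian) = 0"

definition optimally_stable :: "real \<Rightarrow> (real^'n \<Rightarrow> real^'k) \<Rightarrow> bool" where
  "optimally_stable \<rho> f \<longleftrightarrow> admissible f \<and>
      (\<forall>g :: real^'n \<Rightarrow> real^'k. admissible g \<longrightarrow> noise_stab \<rho> g \<le> noise_stab \<rho> f)"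

end

theory Submission
  imports Defs
begin

text \<open>Write \<open>B(a, b) = E\<langle>a(x), b(y)\<rangle>\<close> for \<open>\<rho>\<close>-correlated \<open>x, y\<close>, so that the noise
  stability of \<open>g\<close> is \<open>B(g, g)\<close> and, by Fubini, \<open>B(a, b) = E\<langle>a, U\<^sub>\<rho> b\<rangle>\<close>. The pair
  \<open>(x, y)\<close> is exchangeable, because the reflection \<open>(x, z) \<mapsto> (\<rho> x + s z, s x - \<rho> z)\<close> with
  \<open>s = sqrt (1 - \<rho>\<^sup>2)\<close> preserves the product Gaussian measure; hence \<open>B\<close> is symmetric.
  Admissible functions form a convex set, so comparing \<open>f\<close> with \<open>f + t (g - f)\<close> for small
  \<open>t > 0\<close> shows that an optimally stable \<open>f\<close> also maximizes the linear functional
  \<open>g \<mapsto> E\<langle>g, u\<rangle>\<close> with \<open>u = U\<^sub>\<rho> f\<close> over admissible \<open>g\<close>.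

  For such a linear problem let \<open>c\<close> minimize \<open>E|u - c|\<close>. The one-sided derivatives of this
  convex function at \<open>c\<close> show \<open>|E sgn (u - c)| \<le> P(u = c)\<close>, so \<open>sgn (u - c)\<close> can be corrected
  on \<open>{u = c}\<close> to an admissible \<open>g\<close> with \<open>\<langle>g, u - c\<rangle> = |u - c|\<close>. Mean zero turns
  \<open>E\<langle>\<cdot>, u\<rangle>\<close> into \<open>E\<langle>\<cdot>, u - c\<rangle>\<close>, so maximality of \<open>f\<close> gives
  \<open>E|u - c| \<le> E\<langle>f, u - c\<rangle>\<close>; as \<open>|f| \<le> 1\<close>, equality holds in Cauchy-Schwarz almost everywhere,
  i.e. \<open>|u - c| f = u - c\<close>. The theorem follows with \<open>\<lambda> = 2 c\<close>.\<close>

section \<open>Maximizing correlation over mean-zero fields in the unit ball\<close>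

lemma abs_inner_le_mult:
  fixes x y :: "'a::real_inner"
  assumes "norm x \<le> A" and "norm y \<le> B"
  shows "\<bar>inner x y\<bar> \<le> A * B"
proof -
  have "0 \<le> A"
    using assms(1) norm_ge_zero order_trans by blast
  then show ?thesis
    using Cauchy_Schwarz_ineq2[of x y] mult_mono[OF assms] by simp
qed

lemma norm_difference_quotient_tendsto:
  fixes a v :: "'a::real_inner"
  assumes "a \<noteq> 0" and "X \<longlonglongrightarrow> 0" and "\<And>n. X n \<noteq> 0"
  shows "(\<lambda>n. (norm (a + X n *\<^sub>R v) - norm a) / X n) \<longlonglongrightarrow> inner (sgn a) v"
proof -
  have "((\<lambda>t. a + t *\<^sub>R v) has_derivative (\<lambda>t. t *\<^sub>R v)) (at 0)"
    by (auto intro!: derivative_eq_intros)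
  moreover have "(norm has_derivative (\<lambda>h. h \<bullet> sgn a)) (at ((\<lambda>t. a + t *\<^sub>R v) 0))"
    using has_derivative_norm[OF assms(1)] by simp
  ultimately have "((\<lambda>t. norm (a + t *\<^sub>R v)) has_derivative (\<lambda>t. (t *\<^sub>R v) \<bullet> sgn a)) (at 0)"
    by (rule has_derivative_compose)
  then have "((\<lambda>t. norm (a + t *\<^sub>R v)) has_real_derivative inner (sgn a) v) (at 0)"
    unfolding has_field_derivative_def
    by (rule has_derivative_eq_rhs) (simp add: fun_eq_iff inner_commute)
  then have "((\<lambda>t. (norm (a + t *\<^sub>R v) - norm a) / t) \<longlongrightarrow> inner (sgn a) v) (at 0)"
    by (simp add: DERIV_def)
  with assms(2,3) show ?thesis
    by (simp flip: LIMSEQ_SEQ_conv)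
qed

lemma scaleR_norm_eq_if_inner_eq_norm:
  fixes u w :: "'a::real_inner"
  assumes "norm u \<le> 1" and "inner u w = norm w"
  shows "norm w *\<^sub>R u = w"
proof (cases "w = 0")
  case False
  have "norm w \<le> norm u * norm w"
    using norm_cauchy_schwarz[of u w] assms(2) by simp
  then have "norm u = 1"
    using assms(1) False by simp
  then show ?thesis
    using norm_cauchy_schwarz_eq[of u w] assms(2) by simp
qed simp

context prob_space
begin

lemma integrable_inner_bounded:
  fixes a b :: "'a \<Rightarrow> 'b::{real_inner, second_countable_topology}"
  assumes [measurable]: "a \<in> borel_measurable M" "b \<in> borel_measurable M"
    and "\<And>x. x \<in> space M \<Longrightarrow> norm (a x) \<le> A" and "\<And>x. x \<in> space M \<Longrightarrow> norm (b x) \<le> B"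
  shows "integrable M (\<lambda>x. inner (a x) (b x))"
  using assms(3,4) by (intro integrable_const_bound[where B="A * B"]) (auto intro: abs_inner_le_mult)

lemma integrable_dist_bounded:
  fixes u :: "'a \<Rightarrow> 'b::{banach, second_countable_topology}"
  assumes [measurable]: "u \<in> borel_measurable M" and bound: "\<And>x. x \<in> space M \<Longrightarrow> norm (u x) \<le> B"
  shows "integrable M (\<lambda>x. norm (u x - l))"
proof (rule integrable_const_bound[where B="B + norm l"])
  show "AE x in M. norm (norm (u x - l)) \<le> B + norm l"
  proof (rule AE_I2)
    fix x
    assume "x \<in> space M"
    then show "norm (norm (u x - l)) \<le> B + norm l"
      using norm_triangle_ineq4[of "u x" l] bound[of x] by simp
  qed
qed measurable

lemma lipschitz_expectation_dist:
  fixes u :: "'a \<Rightarrow> 'b::{banach, second_countable_topology}"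
  assumes [measurable]: "u \<in> borel_measurable M" and bound: "\<And>x. x \<in> space M \<Longrightarrow> norm (u x) \<le> B"
  shows "1-lipschitz_on UNIV (\<lambda>l. expectation (\<lambda>x. norm (u x - l)))"
proof -
  note integrable = integrable_dist_bounded[OF assms]
  have le: "expectation (\<lambda>x. norm (u x - a)) - expectation (\<lambda>x. norm (u x - b)) \<le> norm (a - b)" for a b
  proof -
    have "expectation (\<lambda>x. norm (u x - a)) - expectation (\<lambda>x. norm (u x - b))
        = expectation (\<lambda>x. norm (u x - a) - norm (u x - b))"
      using integrable by simp
    also have "\<dots> \<le> norm (a - b)"
    proof (intro integral_le_const AE_I2)
      fix x
      show "norm (u x - a) - norm (u x - b) \<le> norm (a - b)"
        using norm_triangle_ineq2[of "u x - a" "u x - b"] by (simp add: norm_minus_commute)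
    qed (use integrable in simp)
    finally show ?thesis .
  qed
  show ?thesis
  proof (rule lipschitz_onI)
    fix a b :: 'b
    show "dist (expectation (\<lambda>x. norm (u x - a))) (expectation (\<lambda>x. norm (u x - b))) \<le> 1 * dist a b"
      using le[of a b] le[of b a] by (simp add: dist_real_def dist_norm abs_le_iff norm_minus_commute)
  qed simp
qed

lemma expectation_dist_has_minimizer:
  fixes u :: "'a \<Rightarrow> 'b::euclidean_space"
  assumes [measurable]: "u \<in> borel_measurable M" and bound: "\<And>x. x \<in> space M \<Longrightarrow> norm (u x) \<le> B"
  obtains c where "\<And>l. expectation (\<lambda>x. norm (u x - c)) \<le> expectation (\<lambda>x. norm (u x - l))"
proof -
  define \<phi> where "\<phi> l = expectation (\<lambda>x. norm (u x - l))" for l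
  note integrable = integrable_dist_bounded[OF assms]
  have "continuous_on (cball 0 (2 * B)) \<phi>"
    using lipschitz_on_continuous_on[OF lipschitz_expectation_dist[OF assms]]
    unfolding \<phi>_def [abs_def] by (rule continuous_on_subset) auto
  moreover have "0 \<le> B"
    using not_empty bound norm_ge_zero order_trans by blast
  ultimately obtain c where c_min: "\<And>l. l \<in> cball 0 (2 * B) \<Longrightarrow> \<phi> c \<le> \<phi> l"
    using continuous_attains_inf[OF compact_cball] by (metis centre_in_cball mult_nonneg_nonneg
        zero_le_numeral empty_iff)
  have "\<phi> c \<le> \<phi> l" for l
  proof (cases "norm l \<le> 2 * B")
    case False
    have "norm l - B \<le> \<phi> l"
      unfolding \<phi>_def
    proof (intro integral_ge_const AE_I2)
      fix x
      assume "x \<in> space M"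
      then show "norm l - B \<le> norm (u x - l)"
        using norm_triangle_ineq4[of "u x" "u x - l"] bound[of x] by simp
    qed (use integrable in simp)
    moreover have "\<phi> 0 \<le> B"
      unfolding \<phi>_def using bound integrable[of 0] by (intro integral_le_const) auto
    ultimately show ?thesis
      using False c_min[of 0] \<open>0 \<le> B\<close> by simp
  qed (simp add: c_min)
  then show ?thesis
    using that unfolding \<phi>_def by blast
qed

lemma expectation_dist_directional_derivative:
  fixes u :: "'a \<Rightarrow> 'b::euclidean_space"
  assumes [measurable]: "u \<in> borel_measurable M" and bound: "\<And>x. x \<in> space M \<Longrightarrow> norm (u x) \<le> B"
    and "t \<longlonglongrightarrow> 0" and t_pos: "\<And>n. 0 < t n"
  shows "(\<lambda>n. (expectation (\<lambda>x. norm (u x - c + t n *\<^sub>R v)) - expectation (\<lambda>x. norm (u x - c))) / t n)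
    \<longlonglongrightarrow> prob {x \<in> space M. u x = c} * norm v + inner (expectation (\<lambda>x. sgn (u x - c))) v"
proof -
  define Z where "Z = {x \<in> space M. u x = c}"
  define q where "q n x = (norm (u x - c + t n *\<^sub>R v) - norm (u x - c)) / t n" for n x
  have [measurable]: "Z \<in> sets M" "q n \<in> borel_measurable M" for n
    unfolding Z_def q_def by measurable
  have lim: "(\<lambda>n. q n x) \<longlonglongrightarrow> indicator Z x * norm v + inner (sgn (u x - c)) v"
    if "x \<in> space M" for x
  proof (cases "u x = c")
    case True
    then have "q n x = norm v" for n
      using t_pos[of n] by (simp add: q_def)
    then show ?thesis
      using True that by (simp add: Z_def)
  next
    case False
    with \<open>t \<longlonglongrightarrow> 0\<close> t_pos have "(\<lambda>n. q n x) \<longlonglongrightarrow> inner (sgn (u x - c)) v"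
      unfolding q_def by (intro norm_difference_quotient_tendsto) (auto simp: less_imp_neq[symmetric])
    with False show ?thesis
      by (simp add: Z_def)
  qed
  have q_bound: "norm (q n x) \<le> norm v" for n x
  proof -
    have "\<bar>norm (u x - c + t n *\<^sub>R v) - norm (u x - c)\<bar> \<le> t n * norm v"
      using norm_triangle_ineq3[of "u x - c + t n *\<^sub>R v" "u x - c"] t_pos[of n] by simp
    then show ?thesis
      using t_pos[of n] by (simp add: q_def divide_le_eq mult.commute)
  qed
  have "(\<lambda>n. expectation (q n)) \<longlonglongrightarrow> expectation (\<lambda>x. indicator Z x * norm v + inner (sgn (u x - c)) v)"
    using lim q_bound by (intro integral_dominated_convergence[where w="\<lambda>_. norm v"]) auto
  moreover have "expectation (q n)
      = (expectation (\<lambda>x. norm (u x - c + t n *\<^sub>R v)) - expectation (\<lambda>x. norm (u x - c))) / t n" for n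
    using integrable_dist_bounded[OF assms(1,2)]
    by (simp add: q_def [abs_def] algebra_simps flip: diff_diff_eq2)
  moreover have "integrable M (\<lambda>x. sgn (u x - c))"
    by (intro integrable_const_bound[where B=1]) (auto simp: norm_sgn)
  moreover have "integrable M (indicator Z :: 'a \<Rightarrow> real)"
    by (rule integrable_real_indicator) (simp_all add: less_top[symmetric])
  ultimately show ?thesis
    by (simp add: Z_def [symmetric] Int_absorb2 sets.sets_into_space)
qed

lemma expectation_dist_minimizer_subgradient:
  fixes u :: "'a \<Rightarrow> 'b::euclidean_space"
  assumes [measurable]: "u \<in> borel_measurable M" and bound: "\<And>x. x \<in> space M \<Longrightarrow> norm (u x) \<le> B"
    and min: "\<And>l. expectation (\<lambda>x. norm (u x - c)) \<le> expectation (\<lambda>x. norm (u x - l))"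
  shows "norm (expectation (\<lambda>x. sgn (u x - c))) \<le> prob {x \<in> space M. u x = c}"
proof -
  define m where "m = expectation (\<lambda>x. sgn (u x - c))"
  define \<mu> where "\<mu> = prob {x \<in> space M. u x = c}"
  have "0 \<le> \<mu> * norm v + inner m v" for v
  proof (rule LIMSEQ_le_const)
    show "(\<lambda>n. (expectation (\<lambda>x. norm (u x - c + inverse (Suc n) *\<^sub>R v))
        - expectation (\<lambda>x. norm (u x - c))) / inverse (Suc n)) \<longlonglongrightarrow> \<mu> * norm v + inner m v"
      unfolding m_def \<mu>_def
      by (rule expectation_dist_directional_derivative[OF assms(1,2) LIMSEQ_inverse_real_of_nat,
            where c=c and v=v]) auto
    show "\<exists>N. \<forall>n\<ge>N. 0 \<le> (expectation (\<lambda>x. norm (u x - c + inverse (Suc n) *\<^sub>R v))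
        - expectation (\<lambda>x. norm (u x - c))) / inverse (Suc n)"
      using min[of "c - inverse (Suc _) *\<^sub>R v"] by (simp add: algebra_simps)
  qed
  from this[of "- m"] have "norm m * norm m \<le> \<mu> * norm m"
    by (simp add: power2_eq_square[symmetric] power2_norm_eq_inner[symmetric])
  moreover have "0 \<le> \<mu>"
    by (simp add: \<mu>_def)
  ultimately show ?thesis
    unfolding m_def [symmetric] \<mu>_def [symmetric] by (cases "m = 0") auto
qed

lemma exists_mean_zero_norming_selection:
  fixes u :: "'a \<Rightarrow> 'b::euclidean_space"
  assumes [measurable]: "u \<in> borel_measurable M" and bound: "\<And>x. x \<in> space M \<Longrightarrow> norm (u x) \<le> B"
  obtains g c where "g \<in> borel_measurable M" "\<And>x. x \<in> space M \<Longrightarrow> norm (g x) \<le> 1"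
    "expectation g = 0" "\<And>x. x \<in> space M \<Longrightarrow> inner (g x) (u x - c) = norm (u x - c)"
proof -
  obtain c where c_min: "\<And>l. expectation (\<lambda>x. norm (u x - c)) \<le> expectation (\<lambda>x. norm (u x - l))"
    using expectation_dist_has_minimizer[OF assms] by blast
  define Z where "Z = {x \<in> space M. u x = c}"
  define m where "m = expectation (\<lambda>x. sgn (u x - c))"
  have m_bound: "norm m \<le> prob Z"
    unfolding m_def Z_def by (rule expectation_dist_minimizer_subgradient[OF assms c_min])
  \<comment> \<open>If \<open>P(Z) = 0\<close> then also \<open>m = 0\<close>, so the junk value \<open>m /\<^sub>R 0 = 0\<close> is harmless.\<close>
  define g where "g x = sgn (u x - c) - indicator Z x *\<^sub>R (m /\<^sub>R prob Z)" for x
  have [measurable]: "Z \<in> sets M"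
    unfolding Z_def by measurable
  have g_meas [measurable]: "g \<in> borel_measurable M"
    unfolding g_def by measurable
  have quotient_bound: "norm (m /\<^sub>R prob Z) \<le> 1"
  proof (cases "prob Z = 0")
    case False
    then have "0 < prob Z"
      using measure_nonneg[of M Z] by linarith
    then show ?thesis
      using m_bound by (simp add: field_simps)
  qed simp
  have g_bound: "norm (g x) \<le> 1" if "x \<in> space M" for x
    using that quotient_bound by (cases "x \<in> Z") (auto simp: g_def Z_def norm_sgn)
  have g_mean: "expectation g = 0"
  proof -
    have "integrable M (\<lambda>x. sgn (u x - c))"
      by (intro integrable_const_bound[where B=1]) (auto simp: norm_sgn)
    moreover have "integrable M (indicator Z :: 'a \<Rightarrow> real)"
      by (rule integrable_real_indicator) (simp_all add: less_top[symmetric])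
    ultimately have "expectation g = m - prob Z *\<^sub>R (m /\<^sub>R prob Z)"
      by (simp add: g_def [abs_def] m_def Int_absorb2 sets.sets_into_space)
    then show ?thesis
      using m_bound by (cases "prob Z = 0") simp_all
  qed
  have g_norming: "inner (g x) (u x - c) = norm (u x - c)" for x
    by (cases "u x = c") (simp_all add: g_def Z_def sgn_div_norm inner_commute dot_square_norm
        power2_eq_square)
  show ?thesis
    by (rule that[OF g_meas g_bound g_mean g_norming])
qed

lemma expectation_inner_shift:
  fixes a u :: "'a \<Rightarrow> 'b::euclidean_space"
  assumes [measurable]: "a \<in> borel_measurable M" "u \<in> borel_measurable M"
    and a_bound: "\<And>x. x \<in> space M \<Longrightarrow> norm (a x) \<le> A" and u_bound: "\<And>x. x \<in> space M \<Longrightarrow> norm (u x) \<le> B"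
    and "expectation a = 0"
  shows "expectation (\<lambda>x. inner (a x) (u x)) = expectation (\<lambda>x. inner (a x) (u x - c))"
proof -
  have "integrable M a"
    using a_bound by (intro integrable_const_bound[where B=A]) auto
  moreover have "integrable M (\<lambda>x. inner (a x) (u x))"
    by (rule integrable_inner_bounded[OF _ _ a_bound u_bound]) measurable
  ultimately show ?thesis
    using \<open>expectation a = 0\<close> by (simp add: inner_diff_right)
qed

lemma mean_zero_maximizer_AE_aligned:
  fixes u f :: "'a \<Rightarrow> 'b::euclidean_space"
  assumes [measurable]: "u \<in> borel_measurable M" "f \<in> borel_measurable M"
    and u_bound: "\<And>x. x \<in> space M \<Longrightarrow> norm (u x) \<le> B"
    and f_bound: "\<And>x. x \<in> space M \<Longrightarrow> norm (f x) \<le> 1" and f_mean: "expectation f = 0"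
    and max: "\<And>g. g \<in> borel_measurable M \<Longrightarrow> (\<And>x. x \<in> space M \<Longrightarrow> norm (g x) \<le> 1) \<Longrightarrow>
      expectation g = 0 \<Longrightarrow> expectation (\<lambda>x. inner (g x) (u x)) \<le> expectation (\<lambda>x. inner (f x) (u x))"
  shows "\<exists>c. AE x in M. norm (u x - c) *\<^sub>R f x = u x - c"
proof -
  obtain g c where g_meas [measurable]: "g \<in> borel_measurable M" and g_bound: "\<And>x. x \<in> space M \<Longrightarrow> norm (g x) \<le> 1"
    and g_mean: "expectation g = 0" and norming: "\<And>x. x \<in> space M \<Longrightarrow> inner (g x) (u x - c) = norm (u x - c)"
    using exists_mean_zero_norming_selection[OF assms(1) u_bound] by blast
  have shifted_bound: "norm (u x - c) \<le> B + norm c" if "x \<in> space M" for x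
    using norm_triangle_ineq4[of "u x" c] u_bound[OF that] by simp
  have integrable_f_shifted: "integrable M (\<lambda>x. inner (f x) (u x - c))"
    by (rule integrable_inner_bounded[OF _ _ f_bound shifted_bound]) measurable
  have integrable_defect: "integrable M (\<lambda>x. norm (u x - c) - inner (f x) (u x - c))"
    using integrable_dist_bounded[OF assms(1) u_bound, of c] integrable_f_shifted by simp
  have "expectation (\<lambda>x. norm (u x - c)) = expectation (\<lambda>x. inner (g x) (u x - c))"
    using norming by (intro Bochner_Integration.integral_cong) simp_all
  also have "\<dots> \<le> expectation (\<lambda>x. inner (f x) (u x - c))"
    using max[OF g_meas g_bound g_mean]
      expectation_inner_shift[OF g_meas assms(1) g_bound u_bound g_mean]
      expectation_inner_shift[OF assms(2,1) f_bound u_bound f_mean] by simp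
  finally have "expectation (\<lambda>x. norm (u x - c) - inner (f x) (u x - c)) \<le> 0"
    using integrable_dist_bounded[OF assms(1) u_bound, of c] integrable_f_shifted by simp
  moreover have defect_nonneg: "AE x in M. 0 \<le> norm (u x - c) - inner (f x) (u x - c)"
  proof (rule AE_I2)
    fix x
    assume "x \<in> space M"
    then show "0 \<le> norm (u x - c) - inner (f x) (u x - c)"
      using norm_cauchy_schwarz[of "f x" "u x - c"] mult_right_mono[OF f_bound, of x "norm (u x - c)"]
      by simp
  qed
  ultimately have "AE x in M. norm (u x - c) - inner (f x) (u x - c) = 0"
    using integral_nonneg_AE[OF defect_nonneg] integral_nonneg_eq_0_iff_AE[OF integrable_defect]
    by simp
  then have "AE x in M. norm (u x - c) *\<^sub>R f x = u x - c"
    using AE_space by eventually_elim (intro scaleR_norm_eq_if_inner_eq_norm f_bound; simp)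
  then show ?thesis ..
qed

end

section \<open>The standard Gaussian measure\<close>

lemma gauss_density_pos: "gauss_density x > 0"
  unfolding gauss_density_def by simp

lemma borel_measurable_gauss_density [measurable]: "gauss_density \<in> borel_measurable borel"
  unfolding gauss_density_def by measurable

lemma sets_std_gaussian [measurable_cong, simp]: "sets std_gaussian = sets borel"
  unfolding std_gaussian_def by simp

lemma space_std_gaussian [simp]: "space std_gaussian = UNIV"
  unfolding std_gaussian_def by simp

lemma gauss_density_eq_prod:
  "gauss_density (x::real^'n) = (\<Prod>b\<in>Basis. std_normal_density (x \<bullet> b))"
proof -
  have norm_sq: "(norm x)\<^sup>2 = (\<Sum>b\<in>Basis. (x \<bullet> b)\<^sup>2)"
    by (subst power2_norm_eq_inner, subst euclidean_inner) (simp add: power2_eq_square)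
  have const: "(1 / sqrt (2 * pi)) ^ CARD('n) = (2 * pi) powr (- real CARD('n) / 2)"
  proof -
    have "1 / sqrt (2 * pi) = (2 * pi) powr (- 1 / 2)"
      by (simp add: powr_minus_divide powr_half_sqrt)
    then show ?thesis
      by (simp add: powr_power [symmetric] powr_realpow [symmetric] powr_powr)
  qed
  have "(\<Prod>b\<in>(Basis :: (real^'n) set). std_normal_density (x \<bullet> b))
      = (1 / sqrt (2 * pi)) ^ CARD('n) * exp (\<Sum>b\<in>Basis. - (x \<bullet> b)\<^sup>2 / 2)"
    by (simp add: std_normal_density_def exp_sum prod_dividef power_one_over)
  also have "\<dots> = gauss_density x"
    by (simp add: gauss_density_def const norm_sq sum_negf sum_divide_distrib)
  finally show ?thesis ..
qed

lemma prob_space_std_gaussian: "prob_space (std_gaussian :: (real^'n) measure)"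
proof
  have "emeasure (std_gaussian :: (real^'n) measure) (space std_gaussian)
      = (\<integral>\<^sup>+x. (\<Prod>b\<in>Basis. ennreal (std_normal_density (x \<bullet> b))) \<partial>(lborel :: (real^'n) measure))"
    by (simp add: std_gaussian_def emeasure_density gauss_density_eq_prod prod_ennreal)
  also have "\<dots> = (\<Prod>b\<in>(Basis :: (real^'n) set). \<integral>\<^sup>+x. ennreal (std_normal_density x) \<partial>lborel)"
    by (rule nn_integral_lborel_prod) auto
  also have "\<dots> = 1"
    by (subst nn_integral_eq_integral) auto
  finally show "emeasure (std_gaussian :: (real^'n) measure) (space std_gaussian) = 1" .
qed

interpretation std_gaussian: prob_space "std_gaussian :: (real^'n) measure"
  by (rule prob_space_std_gaussian)

interpretation std_gaussian_pair: pair_prob_space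
  "std_gaussian :: (real^'n) measure" "std_gaussian :: (real^'n) measure" ..

lemma AE_std_gaussian_iff_AE_lborel:
  "(AE x in std_gaussian. P x) \<longleftrightarrow> (AE x in (lborel :: (real^'n) measure). P x)"
  unfolding std_gaussian_def by (simp add: AE_density gauss_density_pos)

lemma integrable_std_gaussian_bounded:
  fixes g :: "real^'n \<Rightarrow> 'b::{banach, second_countable_topology}"
  assumes "g \<in> borel_measurable borel" and "\<And>x. norm (g x) \<le> B"
  shows "integrable std_gaussian g"
  using assms by (intro std_gaussian.integrable_const_bound[where B=B]) auto

section \<open>Invariance of Gaussian pairs under reflections\<close>

lemma nn_integral_lborel_translate:
  fixes g :: "'a::euclidean_space \<Rightarrow> ennreal"
  assumes [measurable]: "g \<in> borel_measurable borel"
  shows "(\<integral>\<^sup>+x. g (x + t) \<partial>lborel) = (\<integral>\<^sup>+x. g x \<partial>lborel)"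
proof -
  have "(\<integral>\<^sup>+x. g x \<partial>lborel) = (\<integral>\<^sup>+x. g x \<partial>distr lborel borel ((+) t))"
    by (simp add: lborel_distr_plus)
  also have "\<dots> = (\<integral>\<^sup>+x. g (t + x) \<partial>lborel)"
    by (rule nn_integral_distr) auto
  finally show ?thesis
    by (simp add: add.commute)
qed

lemma nn_integral_lborel_uminus:
  fixes g :: "'a::euclidean_space \<Rightarrow> ennreal"
  assumes [measurable]: "g \<in> borel_measurable borel"
  shows "(\<integral>\<^sup>+x. g (- x) \<partial>lborel) = (\<integral>\<^sup>+x. g x \<partial>lborel)"
proof -
  have "(\<integral>\<^sup>+x. g x \<partial>lborel) = (\<integral>\<^sup>+x. g x \<partial>distr lborel borel uminus)"
    using lborel_affine[of "-1::real" "0::'a"] by (simp add: density_1)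
  also have "\<dots> = (\<integral>\<^sup>+x. g (- x) \<partial>lborel)"
    by (rule nn_integral_distr) auto
  finally show ?thesis ..
qed

lemma nn_integral_pair_lborel_shear_fst:
  fixes h :: "'a::euclidean_space \<times> 'a \<Rightarrow> ennreal"
  assumes [measurable]: "h \<in> borel_measurable (lborel \<Otimes>\<^sub>M lborel)"
  shows "(\<integral>\<^sup>+w. h (fst w + c *\<^sub>R snd w, snd w) \<partial>(lborel \<Otimes>\<^sub>M lborel))
       = integral\<^sup>N (lborel \<Otimes>\<^sub>M lborel) h"
proof -
  have "(\<integral>\<^sup>+w. h (fst w + c *\<^sub>R snd w, snd w) \<partial>(lborel \<Otimes>\<^sub>M lborel))
      = (\<integral>\<^sup>+z. \<integral>\<^sup>+x. h (x + c *\<^sub>R z, z) \<partial>lborel \<partial>lborel)"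
    by (subst lborel_pair.nn_integral_snd[symmetric]) (auto simp: split_beta')
  also have "\<dots> = (\<integral>\<^sup>+z. \<integral>\<^sup>+x. h (x, z) \<partial>lborel \<partial>lborel)"
    by (intro nn_integral_cong nn_integral_lborel_translate[where g="\<lambda>x. h (x, _)"]) measurable
  also have "\<dots> = integral\<^sup>N (lborel \<Otimes>\<^sub>M lborel) h"
    by (subst lborel_pair.nn_integral_snd[symmetric]) auto
  finally show ?thesis .
qed

lemma nn_integral_pair_lborel_shear_snd:
  fixes h :: "'a::euclidean_space \<times> 'a \<Rightarrow> ennreal"
  assumes [measurable]: "h \<in> borel_measurable (lborel \<Otimes>\<^sub>M lborel)"
  shows "(\<integral>\<^sup>+w. h (fst w, snd w + c *\<^sub>R fst w) \<partial>(lborel \<Otimes>\<^sub>M lborel))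
       = integral\<^sup>N (lborel \<Otimes>\<^sub>M lborel) h"
proof -
  have "(\<integral>\<^sup>+w. h (fst w, snd w + c *\<^sub>R fst w) \<partial>(lborel \<Otimes>\<^sub>M lborel))
      = (\<integral>\<^sup>+x. \<integral>\<^sup>+z. h (x, z + c *\<^sub>R x) \<partial>lborel \<partial>lborel)"
    by (subst lborel.nn_integral_fst[symmetric]) (auto simp: split_beta')
  also have "\<dots> = (\<integral>\<^sup>+x. \<integral>\<^sup>+z. h (x, z) \<partial>lborel \<partial>lborel)"
    by (intro nn_integral_cong nn_integral_lborel_translate[where g="\<lambda>z. h (_, z)"]) measurable
  also have "\<dots> = integral\<^sup>N (lborel \<Otimes>\<^sub>M lborel) h"
    by (subst lborel.nn_integral_fst[symmetric]) auto
  finally show ?thesis .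
qed

lemma nn_integral_pair_lborel_uminus_snd:
  fixes h :: "'a::euclidean_space \<times> 'a \<Rightarrow> ennreal"
  assumes [measurable]: "h \<in> borel_measurable (lborel \<Otimes>\<^sub>M lborel)"
  shows "(\<integral>\<^sup>+w. h (fst w, - snd w) \<partial>(lborel \<Otimes>\<^sub>M lborel)) = integral\<^sup>N (lborel \<Otimes>\<^sub>M lborel) h"
proof -
  have "(\<integral>\<^sup>+w. h (fst w, - snd w) \<partial>(lborel \<Otimes>\<^sub>M lborel))
      = (\<integral>\<^sup>+x. \<integral>\<^sup>+z. h (x, - z) \<partial>lborel \<partial>lborel)"
    by (subst lborel.nn_integral_fst[symmetric]) (auto simp: split_beta')
  also have "\<dots> = (\<integral>\<^sup>+x. \<integral>\<^sup>+z. h (x, z) \<partial>lborel \<partial>lborel)"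
    by (intro nn_integral_cong nn_integral_lborel_uminus[where g="\<lambda>z. h (_, z)"]) measurable
  also have "\<dots> = integral\<^sup>N (lborel \<Otimes>\<^sub>M lborel) h"
    by (subst lborel.nn_integral_fst[symmetric]) auto
  finally show ?thesis .
qed

text \<open>The reflection is a sign change in the second coordinate followed by three shears
  with coefficients \<open>-a\<close>, \<open>s\<close>, \<open>-a\<close>, where \<open>a = s / (1 + \<rho>)\<close>.\<close>

lemma reflection_eq_shears:
  fixes x z :: "'a::real_vector"
  assumes unit: "\<rho>\<^sup>2 + s\<^sup>2 = 1" and "-1 < \<rho>" and a_def: "a = s / (1 + \<rho>)"
  shows "- z + s *\<^sub>R (x + (- a) *\<^sub>R (- z)) = s *\<^sub>R x - \<rho> *\<^sub>R z"
    and "x + (- a) *\<^sub>R (- z) + (- a) *\<^sub>R (s *\<^sub>R x - \<rho> *\<^sub>R z) = \<rho> *\<^sub>R x + s *\<^sub>R z"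
proof -
  have a_s: "1 - a * s = \<rho>"
  proof -
    have "a * s = (1 - \<rho>\<^sup>2) / (1 + \<rho>)"
      using unit by (simp add: a_def power2_eq_square)
    also have "\<dots> = 1 - \<rho>"
      using \<open>-1 < \<rho>\<close> by (simp add: power2_eq_square field_simps)
    finally show ?thesis by simp
  qed
  have "- z + s *\<^sub>R (x + (- a) *\<^sub>R (- z)) = s *\<^sub>R x - (1 - a * s) *\<^sub>R z"
    by (simp add: algebra_simps)
  then show "- z + s *\<^sub>R (x + (- a) *\<^sub>R (- z)) = s *\<^sub>R x - \<rho> *\<^sub>R z"
    by (simp only: a_s)
  have "a * (1 + \<rho>) = s"
    using \<open>-1 < \<rho>\<close> by (simp add: a_def)
  then have "x + (- a) *\<^sub>R (- z) + (- a) *\<^sub>R (s *\<^sub>R x - \<rho> *\<^sub>R z) = (1 - a * s) *\<^sub>R x + s *\<^sub>R z"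
    by (simp add: algebra_simps flip: scaleR_add_left)
  then show "x + (- a) *\<^sub>R (- z) + (- a) *\<^sub>R (s *\<^sub>R x - \<rho> *\<^sub>R z) = \<rho> *\<^sub>R x + s *\<^sub>R z"
    by (simp only: a_s)
qed

lemma nn_integral_pair_lborel_reflection:
  fixes h :: "'a::euclidean_space \<times> 'a \<Rightarrow> ennreal"
  assumes [measurable]: "h \<in> borel_measurable (lborel \<Otimes>\<^sub>M lborel)"
    and unit: "\<rho>\<^sup>2 + s\<^sup>2 = 1" and "-1 < \<rho>"
  shows "(\<integral>\<^sup>+w. h (\<rho> *\<^sub>R fst w + s *\<^sub>R snd w, s *\<^sub>R fst w - \<rho> *\<^sub>R snd w) \<partial>(lborel \<Otimes>\<^sub>M lborel))
       = integral\<^sup>N (lborel \<Otimes>\<^sub>M lborel) h"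
proof -
  define a where "a = s / (1 + \<rho>)"
  define h1 where "h1 w = h (fst w + (- a) *\<^sub>R snd w, snd w)" for w
  define h2 where "h2 w = h1 (fst w, snd w + s *\<^sub>R fst w)" for w
  define h3 where "h3 w = h2 (fst w + (- a) *\<^sub>R snd w, snd w)" for w
  have [measurable]: "h1 \<in> borel_measurable (lborel \<Otimes>\<^sub>M lborel)"
    "h2 \<in> borel_measurable (lborel \<Otimes>\<^sub>M lborel)" "h3 \<in> borel_measurable (lborel \<Otimes>\<^sub>M lborel)"
    unfolding h1_def h2_def h3_def by measurable
  have "h (\<rho> *\<^sub>R x + s *\<^sub>R z, s *\<^sub>R x - \<rho> *\<^sub>R z) = h3 (x, - z)" for x z
    by (simp only: h3_def h2_def h1_def fst_conv snd_conv
        reflection_eq_shears[OF unit \<open>-1 < \<rho>\<close> a_def])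
  then have "(\<integral>\<^sup>+w. h (\<rho> *\<^sub>R fst w + s *\<^sub>R snd w, s *\<^sub>R fst w - \<rho> *\<^sub>R snd w) \<partial>(lborel \<Otimes>\<^sub>M lborel))
      = (\<integral>\<^sup>+w. h3 (fst w, - snd w) \<partial>(lborel \<Otimes>\<^sub>M lborel))"
    by simp
  also have "\<dots> = integral\<^sup>N (lborel \<Otimes>\<^sub>M lborel) h3"
    by (rule nn_integral_pair_lborel_uminus_snd) measurable
  also have "\<dots> = integral\<^sup>N (lborel \<Otimes>\<^sub>M lborel) h2"
    unfolding h3_def by (rule nn_integral_pair_lborel_shear_fst) measurable
  also have "\<dots> = integral\<^sup>N (lborel \<Otimes>\<^sub>M lborel) h1"
    unfolding h2_def by (rule nn_integral_pair_lborel_shear_snd) measurable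
  also have "\<dots> = integral\<^sup>N (lborel \<Otimes>\<^sub>M lborel) h"
    unfolding h1_def by (rule nn_integral_pair_lborel_shear_fst) measurable
  finally show ?thesis .
qed

lemma std_gaussian_pair_eq_density:
  "(std_gaussian \<Otimes>\<^sub>M std_gaussian :: ((real^'n) \<times> (real^'n)) measure)
     = density (lborel \<Otimes>\<^sub>M lborel) (\<lambda>(x, z). ennreal (gauss_density x) * ennreal (gauss_density z))"
  unfolding std_gaussian_def
  by (rule pair_measure_density)
     (auto intro: sigma_finite_lborel prob_space_imp_sigma_finite
       prob_space_std_gaussian[unfolded std_gaussian_def])

lemma gauss_density_mult_reflection:
  fixes x z :: "real^'n"
  assumes unit: "\<rho>\<^sup>2 + s\<^sup>2 = 1"
  shows "gauss_density (\<rho> *\<^sub>R x + s *\<^sub>R z) * gauss_density (s *\<^sub>R x - \<rho> *\<^sub>R z)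
       = gauss_density x * gauss_density z"
proof -
  have product: "gauss_density x * gauss_density z
      = ((2 * pi) powr (- real CARD('n) / 2))\<^sup>2 * exp (- ((norm x)\<^sup>2 + (norm z)\<^sup>2) / 2)"
    for x z :: "real^'n"
    by (simp add: gauss_density_def power2_eq_square exp_add[symmetric] add_divide_distrib)
  have "(norm (\<rho> *\<^sub>R x + s *\<^sub>R z))\<^sup>2 + (norm (s *\<^sub>R x - \<rho> *\<^sub>R z))\<^sup>2
      = (\<rho>\<^sup>2 + s\<^sup>2) * ((norm x)\<^sup>2 + (norm z)\<^sup>2)"
    unfolding power2_norm_eq_inner
    by (simp add: inner_add_left inner_add_right inner_diff_left inner_diff_right
        inner_commute[of z x] algebra_simps power2_eq_square)
  then show ?thesis
    by (simp only: product unit mult_1)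
qed

lemma nn_integral_std_gaussian_pair_reflection:
  fixes h :: "(real^'n) \<times> (real^'n) \<Rightarrow> ennreal"
  assumes [measurable]: "h \<in> borel_measurable (borel \<Otimes>\<^sub>M borel)"
    and unit: "\<rho>\<^sup>2 + s\<^sup>2 = 1" and "-1 < \<rho>"
  shows "(\<integral>\<^sup>+w. h (\<rho> *\<^sub>R fst w + s *\<^sub>R snd w, s *\<^sub>R fst w - \<rho> *\<^sub>R snd w)
           \<partial>(std_gaussian \<Otimes>\<^sub>M std_gaussian))
       = integral\<^sup>N (std_gaussian \<Otimes>\<^sub>M std_gaussian) h"
proof -
  define G where "G = (\<lambda>(x::real^'n, z::real^'n). ennreal (gauss_density x) * ennreal (gauss_density z))"
  let ?T = "\<lambda>w. (\<rho> *\<^sub>R fst w + s *\<^sub>R snd w, s *\<^sub>R fst w - \<rho> *\<^sub>R snd w)"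
  have [measurable]: "G \<in> borel_measurable (lborel \<Otimes>\<^sub>M lborel)"
    "h \<in> borel_measurable (lborel \<Otimes>\<^sub>M lborel)"
    unfolding G_def using assms(1) by (auto cong: measurable_cong_sets)
  have G_reflection: "G (?T w) = G w" for w
    using gauss_density_mult_reflection[OF unit, of "fst w" "snd w"]
    by (simp add: G_def split_beta ennreal_mult[symmetric] gauss_density_pos less_imp_le)
  have "(\<integral>\<^sup>+w. h (?T w) \<partial>(std_gaussian \<Otimes>\<^sub>M std_gaussian))
      = (\<integral>\<^sup>+w. G (?T w) * h (?T w) \<partial>(lborel \<Otimes>\<^sub>M lborel))"
    unfolding std_gaussian_pair_eq_density G_def[symmetric] G_reflection
    by (rule nn_integral_density) measurable
  also have "\<dots> = (\<integral>\<^sup>+w. G w * h w \<partial>(lborel \<Otimes>\<^sub>M lborel))"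
    by (rule nn_integral_pair_lborel_reflection[where h="\<lambda>w. G w * h w", OF _ unit \<open>-1 < \<rho>\<close>])
      measurable
  also have "\<dots> = integral\<^sup>N (std_gaussian \<Otimes>\<^sub>M std_gaussian) h"
    unfolding std_gaussian_pair_eq_density G_def[symmetric]
    by (rule nn_integral_density[symmetric]) measurable
  finally show ?thesis .
qed

lemma distr_std_gaussian_pair_reflection:
  assumes unit: "\<rho>\<^sup>2 + s\<^sup>2 = 1" and "-1 < \<rho>"
  shows "distr (std_gaussian \<Otimes>\<^sub>M std_gaussian) (std_gaussian \<Otimes>\<^sub>M std_gaussian)
      (\<lambda>w. (\<rho> *\<^sub>R fst w + s *\<^sub>R snd w, s *\<^sub>R fst w - \<rho> *\<^sub>R snd w))
    = (std_gaussian \<Otimes>\<^sub>M std_gaussian :: ((real^'n) \<times> (real^'n)) measure)"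
    (is "distr ?G ?G ?T = ?G")
proof (rule measure_eqI)
  show "sets (distr ?G ?G ?T) = sets ?G"
    by simp
  fix A
  assume "A \<in> sets (distr ?G ?G ?T)"
  then have [measurable]: "A \<in> sets (borel \<Otimes>\<^sub>M borel)" "A \<in> sets ?G"
    by (simp_all cong: sets_pair_measure_cong)
  have "emeasure (distr ?G ?G ?T) A = (\<integral>\<^sup>+w. indicator A w \<partial>distr ?G ?G ?T)"
    by simp
  also have "\<dots> = (\<integral>\<^sup>+w. indicator A (?T w) \<partial>?G)"
    by (rule nn_integral_distr) measurable
  also have "\<dots> = emeasure ?G A"
    by (subst nn_integral_std_gaussian_pair_reflection[OF _ assms]) simp_all
  finally show "emeasure (distr ?G ?G ?T) A = emeasure ?G A" .
qed

lemma integral_std_gaussian_pair_correlated_swap: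
  fixes H :: "(real^'n) \<times> (real^'n) \<Rightarrow> 'b::{banach, second_countable_topology}"
  assumes [measurable]: "H \<in> borel_measurable (borel \<Otimes>\<^sub>M borel)"
    and unit: "\<rho>\<^sup>2 + s\<^sup>2 = 1" and "-1 < \<rho>"
  shows "(\<integral>w. H (fst w, \<rho> *\<^sub>R fst w + s *\<^sub>R snd w) \<partial>(std_gaussian \<Otimes>\<^sub>M std_gaussian))
       = (\<integral>w. H (\<rho> *\<^sub>R fst w + s *\<^sub>R snd w, fst w) \<partial>(std_gaussian \<Otimes>\<^sub>M std_gaussian))"
proof -
  let ?G = "std_gaussian \<Otimes>\<^sub>M std_gaussian :: ((real^'n) \<times> (real^'n)) measure"
  let ?T = "\<lambda>w. (\<rho> *\<^sub>R fst w + s *\<^sub>R snd w, s *\<^sub>R fst w - \<rho> *\<^sub>R snd w)"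
  define F where "F w = H (\<rho> *\<^sub>R fst w + s *\<^sub>R snd w, fst w)" for w
  have [measurable]: "F \<in> borel_measurable ?G"
    unfolding F_def by measurable
  have involution: "\<rho> *\<^sub>R (\<rho> *\<^sub>R x + s *\<^sub>R z) + s *\<^sub>R (s *\<^sub>R x - \<rho> *\<^sub>R z) = x" for x z :: "real^'n"
  proof -
    have "\<rho> *\<^sub>R (\<rho> *\<^sub>R x + s *\<^sub>R z) + s *\<^sub>R (s *\<^sub>R x - \<rho> *\<^sub>R z) = (\<rho>\<^sup>2 + s\<^sup>2) *\<^sub>R x"
      by (simp add: algebra_simps power2_eq_square)
    then show ?thesis
      using unit by simp
  qed
  have "(\<integral>w. H (fst w, \<rho> *\<^sub>R fst w + s *\<^sub>R snd w) \<partial>?G) = (\<integral>w. F (?T w) \<partial>?G)"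
    by (simp add: F_def involution)
  also have "\<dots> = integral\<^sup>L (distr ?G ?G ?T) F"
    by (rule integral_distr[symmetric]) measurable
  also have "\<dots> = integral\<^sup>L ?G F"
    by (simp only: distr_std_gaussian_pair_reflection[OF assms(2,3)])
  finally show ?thesis
    unfolding F_def .
qed

section \<open>Noise stability and its first variation\<close>

lemma borel_measurable_OU [measurable]:
  fixes b :: "real^'n \<Rightarrow> real^'k"
  assumes [measurable]: "b \<in> borel_measurable borel"
  shows "OU \<rho> b \<in> borel_measurable borel"
  unfolding OU_def by (rule std_gaussian.borel_measurable_lebesgue_integral) measurable

lemma norm_OU_le:
  fixes b :: "real^'n \<Rightarrow> real^'k"
  assumes [measurable]: "b \<in> borel_measurable borel" and bound: "\<And>x. norm (b x) \<le> B"
  shows "norm (OU \<rho> b x) \<le> B"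
proof -
  have "norm (OU \<rho> b x) \<le> (\<integral>z. norm (b (\<rho> *\<^sub>R x + sqrt (1 - \<rho>\<^sup>2) *\<^sub>R z)) \<partial>std_gaussian)"
    unfolding OU_def by (rule integral_norm_bound)
  also have "\<dots> \<le> B"
    using bound by (intro std_gaussian.integral_le_const integrable_std_gaussian_bounded) auto
  finally show ?thesis .
qed

lemma integrable_inner_OU:
  fixes a b :: "real^'n \<Rightarrow> real^'k"
  assumes [measurable]: "a \<in> borel_measurable borel" "b \<in> borel_measurable borel"
    and a_bound: "\<And>x. norm (a x) \<le> A" and b_bound: "\<And>x. norm (b x) \<le> B"
  shows "integrable std_gaussian (\<lambda>x. inner (a x) (OU \<rho> b x))"
  using a_bound norm_OU_le[OF assms(2) b_bound]
  by (intro std_gaussian.integrable_inner_bounded[where A=A and B=B]) auto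

definition noise_form :: "real \<Rightarrow> (real^'n \<Rightarrow> real^'k) \<Rightarrow> (real^'n \<Rightarrow> real^'k) \<Rightarrow> real" where
  "noise_form \<rho> a b = (\<integral>p. inner (a (fst p)) (b (\<rho> *\<^sub>R fst p + sqrt (1 - \<rho>\<^sup>2) *\<^sub>R snd p))
      \<partial>(std_gaussian \<Otimes>\<^sub>M std_gaussian))"

lemma noise_stab_eq_noise_form: "noise_stab \<rho> f = noise_form \<rho> f f"
  unfolding noise_stab_def noise_form_def ..

lemma integrable_noise_form:
  fixes a b :: "real^'n \<Rightarrow> real^'k"
  assumes [measurable]: "a \<in> borel_measurable borel" "b \<in> borel_measurable borel"
    and "\<And>x. norm (a x) \<le> A" and "\<And>x. norm (b x) \<le> B"
  shows "integrable (std_gaussian \<Otimes>\<^sub>M std_gaussian)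
      (\<lambda>p. inner (a (fst p)) (b (\<rho> *\<^sub>R fst p + sqrt (1 - \<rho>\<^sup>2) *\<^sub>R snd p)))"
  using assms(3,4) by (intro std_gaussian_pair.integrable_const_bound[where B="A * B"])
    (auto intro: abs_inner_le_mult)

lemma noise_form_commute:
  fixes a b :: "real^'n \<Rightarrow> real^'k"
  assumes [measurable]: "a \<in> borel_measurable borel" "b \<in> borel_measurable borel"
    and "-1 < \<rho>" "\<rho> \<le> 1"
  shows "noise_form \<rho> a b = noise_form \<rho> b a"
proof -
  have unit: "\<rho>\<^sup>2 + (sqrt (1 - \<rho>\<^sup>2))\<^sup>2 = 1"
    using assms(3,4) by (simp add: abs_square_le_1)
  have "noise_form \<rho> a b
      = (\<integral>w. (\<lambda>(p, q). inner (a p) (b q)) (fst w, \<rho> *\<^sub>R fst w + sqrt (1 - \<rho>\<^sup>2) *\<^sub>R snd w)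
          \<partial>(std_gaussian \<Otimes>\<^sub>M std_gaussian))"
    by (simp add: noise_form_def)
  also have "\<dots> = (\<integral>w. (\<lambda>(p, q). inner (a p) (b q)) (\<rho> *\<^sub>R fst w + sqrt (1 - \<rho>\<^sup>2) *\<^sub>R snd w, fst w)
          \<partial>(std_gaussian \<Otimes>\<^sub>M std_gaussian))"
    by (rule integral_std_gaussian_pair_correlated_swap[OF _ unit \<open>-1 < \<rho>\<close>]) measurable
  also have "\<dots> = noise_form \<rho> b a"
    by (simp add: noise_form_def inner_commute)
  finally show ?thesis .
qed

lemma noise_form_eq_integral_OU:
  fixes a b :: "real^'n \<Rightarrow> real^'k"
  assumes [measurable]: "a \<in> borel_measurable borel" "b \<in> borel_measurable borel"
    and "\<And>x. norm (a x) \<le> A" and bound: "\<And>x. norm (b x) \<le> B"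
  shows "noise_form \<rho> a b = (\<integral>x. inner (a x) (OU \<rho> b x) \<partial>std_gaussian)"
proof -
  have "noise_form \<rho> a b
      = (\<integral>x. (\<integral>z. inner (a x) (b (\<rho> *\<^sub>R x + sqrt (1 - \<rho>\<^sup>2) *\<^sub>R z)) \<partial>std_gaussian) \<partial>std_gaussian)"
    unfolding noise_form_def
    using std_gaussian_pair.integral_fst'[OF integrable_noise_form[OF assms]] by simp
  also have "\<dots> = (\<integral>x. inner (a x) (OU \<rho> b x) \<partial>std_gaussian)"
    unfolding OU_def using bound
    by (intro Bochner_Integration.integral_cong refl integral_inner_right
        integrable_std_gaussian_bounded[where B=B]) auto
  finally show ?thesis .
qed

lemma noise_stab_add_scaleR:
  fixes f d :: "real^'n \<Rightarrow> real^'k"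
  assumes [measurable]: "f \<in> borel_measurable borel" "d \<in> borel_measurable borel"
    and f_bound: "\<And>x. norm (f x) \<le> A" and d_bound: "\<And>x. norm (d x) \<le> B"
  shows "noise_stab \<rho> (\<lambda>x. f x + t *\<^sub>R d x)
       = noise_stab \<rho> f + t * (noise_form \<rho> d f + noise_form \<rho> f d) + t\<^sup>2 * noise_stab \<rho> d"
proof -
  let ?y = "\<lambda>p. \<rho> *\<^sub>R fst p + sqrt (1 - \<rho>\<^sup>2) *\<^sub>R snd p"
  have pointwise: "inner (f x + t *\<^sub>R d x) (f y + t *\<^sub>R d y)
      = inner (f x) (f y) + t * (inner (d x) (f y) + inner (f x) (d y)) + t\<^sup>2 * inner (d x) (d y)"
    for x y
    by (simp add: inner_add_left inner_add_right algebra_simps power2_eq_square)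
  have "has_bochner_integral (std_gaussian \<Otimes>\<^sub>M std_gaussian)
      (\<lambda>p. inner (f (fst p)) (f (?y p))
         + t * (inner (d (fst p)) (f (?y p)) + inner (f (fst p)) (d (?y p)))
         + t\<^sup>2 * inner (d (fst p)) (d (?y p)))
      (noise_stab \<rho> f + t * (noise_form \<rho> d f + noise_form \<rho> f d) + t\<^sup>2 * noise_stab \<rho> d)"
    unfolding noise_stab_eq_noise_form noise_form_def
    by (intro has_bochner_integral_add has_bochner_integral_mult_right has_bochner_integral_integrable
        integrable_noise_form[OF _ _ f_bound f_bound] integrable_noise_form[OF _ _ d_bound f_bound]
        integrable_noise_form[OF _ _ f_bound d_bound] integrable_noise_form[OF _ _ d_bound d_bound])
      measurable
  then show ?thesis
    unfolding noise_stab_def pointwise by (rule has_bochner_integral_integral_eq)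
qed

lemma admissibleD:
  assumes "admissible g"
  shows "g \<in> borel_measurable borel" "\<And>x. norm (g x) \<le> 1" "(\<integral>x. g x \<partial>std_gaussian) = 0"
  using assms unfolding admissible_def by auto

lemma admissible_convex_combination:
  assumes "admissible f" "admissible g" "0 \<le> t" "t \<le> 1"
  shows "admissible (\<lambda>x. (1 - t) *\<^sub>R f x + t *\<^sub>R g x)"
proof -
  note f = admissibleD[OF assms(1)] and g = admissibleD[OF assms(2)]
  have [measurable]: "f \<in> borel_measurable borel" "g \<in> borel_measurable borel"
    using f g by simp_all
  have "norm ((1 - t) *\<^sub>R f x + t *\<^sub>R g x) \<le> 1" for x
  proof -
    have "norm ((1 - t) *\<^sub>R f x + t *\<^sub>R g x) \<le> (1 - t) * norm (f x) + t * norm (g x)"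
      using norm_triangle_ineq[of "(1 - t) *\<^sub>R f x" "t *\<^sub>R g x"] assms(3,4) by simp
    also have "\<dots> \<le> (1 - t) * 1 + t * 1"
      using f(2)[of x] g(2)[of x] assms(3,4) by (intro add_mono mult_left_mono) auto
    finally show ?thesis by simp
  qed
  moreover have "(\<integral>x. (1 - t) *\<^sub>R f x + t *\<^sub>R g x \<partial>std_gaussian) = 0"
    using f g integrable_std_gaussian_bounded[OF f(1,2)] integrable_std_gaussian_bounded[OF g(1,2)]
    by simp
  ultimately show ?thesis
    unfolding admissible_def by simp
qed

lemma nonpos_if_quadratic_le_zero:
  fixes a b :: real
  assumes "\<And>t. 0 < t \<Longrightarrow> t \<le> 1 \<Longrightarrow> t * a + t\<^sup>2 * b \<le> 0"
  shows "a \<le> 0"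
proof (rule ccontr)
  assume "\<not> a \<le> 0"
  define t where "t = min 1 (a / (\<bar>b\<bar> + 1))"
  have t: "0 < t" "t \<le> 1" "t * \<bar>b\<bar> < a"
    using \<open>\<not> a \<le> 0\<close> by (auto simp: t_def min_def field_simps)
  have "t * (a + t * b) \<le> 0"
    using assms[OF t(1,2)] by (simp add: power2_eq_square algebra_simps)
  then have "a + t * b \<le> 0"
    using t(1) by (simp add: mult_le_0_iff)
  moreover have "- (t * \<bar>b\<bar>) \<le> t * b"
    using mult_left_mono[of "- \<bar>b\<bar>" b t] t(1) by simp
  ultimately show False
    using t(3) by linarith
qed

lemma optimally_stable_first_variation:
  fixes f g :: "real^'n \<Rightarrow> real^'k"
  assumes "-1 < \<rho>" "\<rho> \<le> 1" and opt: "optimally_stable \<rho> f" and "admissible g"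
  shows "(\<integral>x. inner (g x) (OU \<rho> f x) \<partial>std_gaussian) \<le> (\<integral>x. inner (f x) (OU \<rho> f x) \<partial>std_gaussian)"
proof -
  have "admissible f"
    and max: "\<And>h :: real^'n \<Rightarrow> real^'k. admissible h \<Longrightarrow> noise_stab \<rho> h \<le> noise_stab \<rho> f"
    using opt by (simp_all add: optimally_stable_def)
  note f = admissibleD[OF \<open>admissible f\<close>] and g = admissibleD[OF \<open>admissible g\<close>]
  have f_meas [measurable]: "f \<in> borel_measurable borel" and [measurable]: "g \<in> borel_measurable borel"
    using f g by simp_all
  define d where "d x = g x - f x" for x
  have d_meas [measurable]: "d \<in> borel_measurable borel"
    unfolding d_def by measurable
  have d_bound: "norm (d x) \<le> 2" for x
    using norm_triangle_ineq4[of "g x" "f x"] f(2)[of x] g(2)[of x] unfolding d_def by simp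
  have "t * (2 * noise_form \<rho> d f) + t\<^sup>2 * noise_stab \<rho> d \<le> 0" if "0 < t" "t \<le> 1" for t
  proof -
    have "(\<lambda>x. f x + t *\<^sub>R d x) = (\<lambda>x. (1 - t) *\<^sub>R f x + t *\<^sub>R g x)"
      by (simp add: d_def algebra_simps)
    then have "noise_stab \<rho> (\<lambda>x. f x + t *\<^sub>R d x) \<le> noise_stab \<rho> f"
      using admissible_convex_combination[OF \<open>admissible f\<close> \<open>admissible g\<close>] that
      by (intro max) simp
    then show ?thesis
      using noise_stab_add_scaleR[OF f_meas d_meas f(2) d_bound]
        noise_form_commute[OF f_meas d_meas assms(1,2)] by simp
  qed
  then have "noise_form \<rho> d f \<le> 0"
    using nonpos_if_quadratic_le_zero[of "2 * noise_form \<rho> d f" "noise_stab \<rho> d"] by simp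
  moreover have "noise_form \<rho> d f
      = (\<integral>x. inner (g x) (OU \<rho> f x) \<partial>std_gaussian) - (\<integral>x. inner (f x) (OU \<rho> f x) \<partial>std_gaussian)"
    using noise_form_eq_integral_OU[OF d_meas f_meas d_bound f(2), where \<rho>=\<rho>]
      integrable_inner_OU[OF g(1) f(1) g(2) f(2)] integrable_inner_OU[OF f(1) f(1) f(2) f(2)]
    by (simp add: d_def [abs_def] inner_diff_left)
  ultimately show ?thesis
    by simp
qed

theorem lemma5p9:
  fixes \<rho> :: real and f :: "real^'n \<Rightarrow> real^'k"
  assumes "0 < \<rho>" "\<rho> < 1"
    and "optimally_stable \<rho> f"
  shows "\<exists>lam :: real^'k. AE x in lborel.
           norm (OU \<rho> f x - (1/2) *\<^sub>R lam) *\<^sub>R f x = OU \<rho> f x - (1/2) *\<^sub>R lam"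
proof -
  have "admissible f"
    using assms(3) by (simp add: optimally_stable_def)
  note f = admissibleD[OF this]
  have "\<exists>c. AE x in std_gaussian. norm (OU \<rho> f x - c) *\<^sub>R f x = OU \<rho> f x - c"
  proof (rule std_gaussian.mean_zero_maximizer_AE_aligned)
    show "norm (OU \<rho> f x) \<le> 1" for x
      by (rule norm_OU_le[OF f(1,2)])
    show "(\<integral>x. inner (g x) (OU \<rho> f x) \<partial>std_gaussian) \<le> (\<integral>x. inner (f x) (OU \<rho> f x) \<partial>std_gaussian)"
      if "g \<in> borel_measurable std_gaussian" "\<And>x. x \<in> space std_gaussian \<Longrightarrow> norm (g x) \<le> 1"
        "(\<integral>x. g x \<partial>std_gaussian) = 0" for g
      using that assms by (intro optimally_stable_first_variation) (auto simp: admissible_def)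
  qed (use f in simp_all)
  then obtain c where "AE x in lborel. norm (OU \<rho> f x - c) *\<^sub>R f x = OU \<rho> f x - c"
    by (auto simp: AE_std_gaussian_iff_AE_lborel)
  then have "AE x in lborel.
      norm (OU \<rho> f x - (1/2) *\<^sub>R (2 *\<^sub>R c)) *\<^sub>R f x = OU \<rho> f x - (1/2) *\<^sub>R (2 *\<^sub>R c)"
    by simp
  then show ?thesis ..
qed

end
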